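(* Let $N\ge 2$, let $\rho$ be a density matrix on $\mathbb{C}^N$ and let $|\psi\rangle\in\mathbb{C}^N$ be a unit vector. Then, computing $\mathcal{C}$ on the $N^2$-dimensional space $\mathbb{C}^N\otimes\mathbb{C}^N$, $$\mathcal{C}(\rho\otimes|\psi\rangle\langle\psi|)\le \frac{S(\rho)}{2\log_2 N}\left(D(\rho,\mathcal{I})+\frac{N-1}{N}\right).$$
   Context: For a density matrix $\rho$ (positive semidefinite, trace one) on an $N$-dimensional Hilbert space, $\mathcal{I}=\mathbb{I}/N$ is the normalized maximally mixed state. The von Neumann entropy is $S(\rho)=-\mathrm{Tr}[\rho\log_2\rho]$, and $D(\rho,\sigma)=\tfrac12\|\rho-\sigma\|_1$ is the trace distance. The Quantum Statistical Complexity Measure is $\mathcal{C}(\rho)=\frac{1}{\log_2 M}\,S(\rho)\,D(\rho,\mathbb{I}/M)$ for a state on an $M$-dimensional space. *)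

theory Defs
  imports "Jordan_Normal_Form.Schur_Decomposition" "Jordan_Normal_Form.Char_Poly"
begin

definition hermitian_mat :: "complex mat \<Rightarrow> bool" where
  "hermitian_mat A \<longleftrightarrow> dim_row A = dim_col A \<and> mat_adjoint A = A"

definition psd_mat :: "complex mat \<Rightarrow> bool" where
  "psd_mat A \<longleftrightarrow> hermitian_mat A \<and>
     (\<forall>v \<in> carrier_vec (dim_row A). 0 \<le> Re ((A *\<^sub>v v) \<bullet>c v))"

definition mat_trace :: "complex mat \<Rightarrow> complex" where
  "mat_trace A = (\<Sum>i<dim_row A. A $$ (i, i))"

definition density_mat :: "nat \<Rightarrow> complex mat \<Rightarrow> bool" where
  "density_mat N \<rho> \<longleftrightarrow> \<rho> \<in> carrier_mat N N \<and> psd_mat \<rho> \<and> mat_trace \<rho> = 1"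

definition eigvals :: "complex mat \<Rightarrow> complex multiset" where
  "eigvals A = proots (char_poly A)"

(* von Neumann entropy S(rho) = -Tr[rho log2 rho], via spectral decomposition *)
definition vn_entropy :: "complex mat \<Rightarrow> real" where
  "vn_entropy \<rho> = - (\<Sum>l\<in>#eigvals \<rho>. (if Re l = 0 then 0 else Re l * log 2 (Re l)))"

(* trace norm ||A||_1 = Tr sqrt(A^dagger A) = sum of singular values *)
definition trace_norm :: "complex mat \<Rightarrow> real" where
  "trace_norm A = (\<Sum>m\<in>#eigvals (mat_adjoint A * A). sqrt (Re m))"

definition trace_dist :: "complex mat \<Rightarrow> complex mat \<Rightarrow> real" where
  "trace_dist \<rho> \<sigma> = trace_norm (\<rho> - \<sigma>) / 2"

definition max_mixed :: "nat \<Rightarrow> complex mat" where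
  "max_mixed M = (1 / of_nat M) \<cdot>\<^sub>m 1\<^sub>m M"

definition qscm :: "complex mat \<Rightarrow> real" where
  "qscm \<rho> = (let M = dim_row \<rho> in
      (1 / log 2 (real M)) * vn_entropy \<rho> * trace_dist \<rho> (max_mixed M))"

definition kron :: "complex mat \<Rightarrow> complex mat \<Rightarrow> complex mat" where
  "kron A B = mat (dim_row A * dim_row B) (dim_col A * dim_col B)
     (\<lambda>(i, j). A $$ (i div dim_row B, j div dim_col B) * B $$ (i mod dim_row B, j mod dim_col B))"

definition ket_bra :: "complex vec \<Rightarrow> complex mat" where
  "ket_bra \<psi> = mat (dim_vec \<psi>) (dim_vec \<psi>) (\<lambda>(i, j). \<psi> $ i * cnj (\<psi> $ j))"

definition is_unit_vec :: "complex vec \<Rightarrow> bool" where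
  "is_unit_vec \<psi> \<longleftrightarrow> (\<Sum>i<dim_vec \<psi>. (cmod (\<psi> $ i))^2) = 1"

end

theory Submission
  imports Defs
begin

(*
  Since |psi><psi| is a projector of trace one, the spectrum of rho (x) |psi><psi| is that of rho
  together with N(N-1) zeros. Hence the entropy does not change, and the trace distance of the
  Hermitian matrix rho (x) |psi><psi| to I/N^2 is half the sum of |lambda - 1/N^2| over this
  spectrum. The triangle inequality |lambda - 1/N^2| <= |lambda - 1/N| + (1/N - 1/N^2) on the
  eigenvalues of rho, plus 1/N^2 for each zero, bounds that sum by 2 D(rho, I/N) + 2(N-1)/N;
  finally log2 (N^2) = 2 log2 N.

  All spectra are read off the diagonal of a triangular matrix similar to the given one, so no
  unitary diagonalisation is needed: for Hermitian A the trace norm is defined through the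
  spectrum of A^dagger A = A^2, which is similar to T^2.
*)

section \<open>Hermitian matrices\<close>

lemma mat_adjoint_dim [simp]:
  "dim_row (mat_adjoint A) = dim_col A" "dim_col (mat_adjoint A) = dim_row A"
  by (auto simp: mat_adjoint_def)

lemma mat_adjoint_index [simp]:
  "i < dim_col A \<Longrightarrow> j < dim_row A \<Longrightarrow> mat_adjoint A $$ (i, j) = cnj (A $$ (j, i))"
  by (auto simp: mat_adjoint_def mat_of_rows_index conjugate_vec_def)

lemma hermitian_matD:
  assumes "hermitian_mat A" and "i < dim_row A" and "j < dim_row A"
  shows "A $$ (j, i) = cnj (A $$ (i, j))"
proof -
  have "dim_col A = dim_row A" and "mat_adjoint A $$ (j, i) = A $$ (j, i)"
    using assms(1) unfolding hermitian_mat_def by auto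
  with assms(2,3) show ?thesis
    by simp
qed

lemma hermitian_matI:
  assumes "A \<in> carrier_mat n n" and "\<And>i j. i < n \<Longrightarrow> j < n \<Longrightarrow> A $$ (j, i) = cnj (A $$ (i, j))"
  shows "hermitian_mat A"
  unfolding hermitian_mat_def
proof (intro conjI eq_matI)
  fix i j assume "i < dim_row A" "j < dim_col A"
  with assms(1) show "mat_adjoint A $$ (i, j) = A $$ (i, j)"
    using assms(2)[of j i] by simp
qed (use assms(1) in auto)

lemma hermitian_minus_scalar:
  assumes "hermitian_mat A" and "A \<in> carrier_mat n n"
  shows "hermitian_mat (A - complex_of_real c \<cdot>\<^sub>m 1\<^sub>m n)"
proof (rule hermitian_matI)
  fix i j assume "i < n" "j < n"
  with assms show "(A - complex_of_real c \<cdot>\<^sub>m 1\<^sub>m n) $$ (j, i)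
      = cnj ((A - complex_of_real c \<cdot>\<^sub>m 1\<^sub>m n) $$ (i, j))"
    using hermitian_matD[OF assms(1), of i j] by auto
qed (use assms(2) in auto)

lemma hermitian_quadratic_form_real:
  assumes "hermitian_mat A" and "A \<in> carrier_mat n n" and "v \<in> carrier_vec n"
  shows "cnj ((A *\<^sub>v v) \<bullet>c v) = (A *\<^sub>v v) \<bullet>c v"
proof -
  have form: "(A *\<^sub>v v) \<bullet>c v = (\<Sum>i<n. \<Sum>j<n. A $$ (i, j) * v $ j * cnj (v $ i))"
    using assms(2,3)
    by (auto simp: scalar_prod_def lessThan_atLeast0 sum_distrib_right intro!: sum.cong)
  have "cnj (\<Sum>i<n. \<Sum>j<n. A $$ (i, j) * v $ j * cnj (v $ i))
      = (\<Sum>i<n. \<Sum>j<n. A $$ (j, i) * v $ i * cnj (v $ j))"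
  proof (simp only: cnj_sum, intro sum.cong refl)
    fix i j assume "i \<in> {..<n}" "j \<in> {..<n}"
    then have "cnj (A $$ (i, j)) = A $$ (j, i)"
      using hermitian_matD[OF assms(1), of i j] assms(2) by simp
    then show "cnj (A $$ (i, j) * v $ j * cnj (v $ i)) = A $$ (j, i) * v $ i * cnj (v $ j)"
      by (simp add: mult_ac)
  qed
  also have "\<dots> = (\<Sum>i<n. \<Sum>j<n. A $$ (i, j) * v $ j * cnj (v $ i))"
    by (rule sum.swap)
  finally show ?thesis unfolding form .
qed

section \<open>Spectra via triangularisation\<close>

lemma mat_trace_mult_comm:
  assumes "A \<in> carrier_mat n m" and "B \<in> carrier_mat m n"
  shows "mat_trace (A * B) = mat_trace (B * A)"
proof -
  have "mat_trace (A * B) = (\<Sum>i<n. \<Sum>k<m. A $$ (i, k) * B $$ (k, i))"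
    using assms by (auto simp: mat_trace_def scalar_prod_def lessThan_atLeast0 intro!: sum.cong)
  also have "\<dots> = (\<Sum>k<m. \<Sum>i<n. B $$ (k, i) * A $$ (i, k))"
    by (subst sum.swap) (simp add: mult.commute)
  also have "\<dots> = mat_trace (B * A)"
    using assms by (auto simp: mat_trace_def scalar_prod_def lessThan_atLeast0 intro!: sum.cong)
  finally show ?thesis .
qed

lemma mat_trace_eq_sum_list_diag_mat:
  "mat_trace T = sum_list (diag_mat T)"
  by (simp add: mat_trace_def diag_mat_def sum_list_sum_nth atLeast0LessThan)

lemma triangularizable:
  fixes A :: "complex mat"
  assumes "A \<in> carrier_mat n n"
  obtains T P Q where "similar_mat_wit A T P Q" and "upper_triangular T"
proof -
  obtain es where es: "char_poly A = (\<Prod>e\<leftarrow>es. [:- e, 1:])"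
    using char_poly_factorized[OF assms] by blast
  obtain T P Q where "schur_decomposition A es = (T, P, Q)"
    by (cases "schur_decomposition A es") auto
  with schur_decomposition[OF assms es] have "similar_mat_wit A T P Q" "upper_triangular T"
    by simp_all
  then show thesis by (rule that)
qed

lemma proots_prod_linear_factors:
  "proots (\<Prod>e\<leftarrow>es. [:- e, 1:]) = mset (es :: complex list)"
proof (induction es)
  case (Cons e es)
  have "proots ([:- e, 1:] * (\<Prod>e\<leftarrow>es. [:- e, 1:])) = {#e#} + proots (\<Prod>e\<leftarrow>es. [:- e, 1:])"
    by (subst proots_mult) (auto simp: prod_list_zero_iff)
  with Cons show ?case by simp
qed simp

lemma eigvals_similar_upper_triangular:
  assumes "similar_mat_wit A T P Q" and "upper_triangular T"
  shows "eigvals A = mset (diag_mat T)"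
proof -
  have T: "T \<in> carrier_mat (dim_row A) (dim_row A)"
    by (rule similar_mat_witD(5)[OF refl assms(1)])
  have "similar_mat A T"
    using assms(1) unfolding similar_mat_def by blast
  then have "char_poly A = char_poly T"
    by (rule char_poly_similar)
  also have "\<dots> = (\<Prod>e\<leftarrow>diag_mat T. [:- e, 1:])"
    by (rule char_poly_upper_triangular[OF T assms(2)])
  finally show ?thesis
    unfolding eigvals_def by (simp add: proots_prod_linear_factors)
qed

lemma size_eigvals:
  fixes A :: "complex mat"
  assumes "A \<in> carrier_mat n n"
  shows "size (eigvals A) = n"
proof -
  obtain T P Q where wit: "similar_mat_wit A T P Q" and ut: "upper_triangular T"
    by (rule triangularizable[OF assms])
  have "T \<in> carrier_mat n n"
    using similar_mat_witD2(5)[OF assms wit] .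
  then show ?thesis
    unfolding eigvals_similar_upper_triangular[OF wit ut] by (simp add: diag_mat_def)
qed

lemma mat_trace_eq_sum_eigvals:
  fixes A :: "complex mat"
  assumes "A \<in> carrier_mat n n"
  shows "mat_trace A = sum_mset (eigvals A)"
proof -
  obtain T P Q where wit: "similar_mat_wit A T P Q" and ut: "upper_triangular T"
    by (rule triangularizable[OF assms])
  note sim = similar_mat_witD2[OF assms wit]
  have "mat_trace A = mat_trace (Q * (P * T))"
    unfolding sim(3) using sim(5-7) by (intro mat_trace_mult_comm) auto
  also have "\<dots> = mat_trace T"
    using sim(2,5-7) by (simp add: assoc_mult_mat[symmetric, of Q n n P n T n])
  also have "\<dots> = sum_mset (eigvals A)"
    by (simp add: eigvals_similar_upper_triangular[OF wit ut] mat_trace_eq_sum_list_diag_mat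
        sum_mset_sum_list)
  finally show ?thesis .
qed

lemma eigvals_minus_scalar:
  fixes A :: "complex mat"
  assumes "A \<in> carrier_mat n n"
  shows "eigvals (A - c \<cdot>\<^sub>m 1\<^sub>m n) = image_mset (\<lambda>x. x - c) (eigvals A)"
proof -
  obtain T P Q where wit: "similar_mat_wit A T P Q" and ut: "upper_triangular T"
    by (rule triangularizable[OF assms])
  note sim = similar_mat_witD2[OF assms wit]
  have "P * (T - c \<cdot>\<^sub>m 1\<^sub>m n) = P * T - c \<cdot>\<^sub>m P"
    using sim(5,6)
    by (simp add: mult_minus_distrib_mat[of _ n n] mult_smult_distrib[OF sim(6) one_carrier_mat])
  then have "P * (T - c \<cdot>\<^sub>m 1\<^sub>m n) * Q = P * T * Q - c \<cdot>\<^sub>m (P * Q)"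
    using sim(5-7) by (simp add: minus_mult_distrib_mat[of _ n n] mult_smult_assoc_mat[of _ n n])
  then have "similar_mat_wit (A - c \<cdot>\<^sub>m 1\<^sub>m n) (T - c \<cdot>\<^sub>m 1\<^sub>m n) P Q"
    using sim by (intro similar_mat_witI[of P Q n]) auto
  moreover have "upper_triangular (T - c \<cdot>\<^sub>m 1\<^sub>m n)"
    using ut sim(5) by (auto simp: upper_triangular_def)
  ultimately have "eigvals (A - c \<cdot>\<^sub>m 1\<^sub>m n) = mset (diag_mat (T - c \<cdot>\<^sub>m 1\<^sub>m n))"
    by (rule eigvals_similar_upper_triangular)
  also have "diag_mat (T - c \<cdot>\<^sub>m 1\<^sub>m n) = map (\<lambda>x. x - c) (diag_mat T)"
    using sim(5) by (intro nth_equalityI) (auto simp: diag_mat_def)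
  finally show ?thesis
    unfolding eigvals_similar_upper_triangular[OF wit ut] by simp
qed

lemma upper_triangular_mult_index:
  assumes "S \<in> carrier_mat n n" "T \<in> carrier_mat n n" "upper_triangular S" "upper_triangular T"
    and "j \<le> i" "i < n"
  shows "(S * T) $$ (i, j) = S $$ (i, i) * T $$ (i, j)"
proof -
  have "S $$ (i, k) * T $$ (k, j) = 0" if "k < n" "k \<noteq> i" for k
  proof (cases "k < i")
    case True
    then show ?thesis using upper_triangularD[OF assms(3) True] assms(1,6) by simp
  next
    case False
    with that assms(5) have "j < k" by simp
    then show ?thesis using upper_triangularD[OF assms(4) \<open>j < k\<close>] that(1) assms(2) by simp
  qed
  then have "(\<Sum>k<n. S $$ (i, k) * T $$ (k, j)) = S $$ (i, i) * T $$ (i, j)"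
    using assms(6) by (subst sum.remove[of _ i]) (auto intro: sum.neutral)
  with assms(1,2,5,6) show ?thesis
    by (simp add: scalar_prod_def atLeast0LessThan)
qed

lemma eigvals_mult_self:
  fixes A :: "complex mat"
  assumes "A \<in> carrier_mat n n"
  shows "eigvals (A * A) = image_mset (\<lambda>x. x * x) (eigvals A)"
proof -
  obtain T P Q where wit: "similar_mat_wit A T P Q" and ut: "upper_triangular T"
    by (rule triangularizable[OF assms])
  have T: "T \<in> carrier_mat n n"
    using similar_mat_witD2(5)[OF assms wit] .
  have "similar_mat_wit (A ^\<^sub>m 2) (T ^\<^sub>m 2) P Q"
    by (rule similar_mat_wit_pow[OF wit])
  then have "similar_mat_wit (A * A) (T * T) P Q"
    using assms T by (simp add: numeral_2_eq_2)
  moreover have "upper_triangular (T * T)"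
  proof (rule upper_triangularI)
    fix i j assume "j < i" "i < dim_row (T * T)"
    then show "(T * T) $$ (i, j) = 0"
      using upper_triangular_mult_index[OF T T ut ut, of j i] upper_triangularD[OF ut, of j i] T
      by simp
  qed
  ultimately have "eigvals (A * A) = mset (diag_mat (T * T))"
    by (rule eigvals_similar_upper_triangular)
  also have "diag_mat (T * T) = map (\<lambda>x. x * x) (diag_mat T)"
    using upper_triangular_mult_index[OF T T ut ut] T
    by (intro nth_equalityI) (auto simp: diag_mat_def simp del: index_mult_mat(1))
  finally show ?thesis
    unfolding eigvals_similar_upper_triangular[OF wit ut] by simp
qed

lemma mem_eigvals_iff:
  fixes A :: "complex mat"
  assumes "A \<in> carrier_mat n n"
  shows "x \<in># eigvals A \<longleftrightarrow> eigenvalue A x"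
proof -
  have "char_poly A \<noteq> 0"
    using degree_monic_char_poly[OF assms] by auto
  then show ?thesis
    unfolding eigvals_def eigenvalue_root_char_poly[OF assms] by simp
qed

lemma eigenvector_quadratic_form:
  fixes A :: "complex mat"
  assumes "eigenvector A v x"
  shows "(A *\<^sub>v v) \<bullet>c v = x * complex_of_real (Re (v \<bullet>c v))" and "Re (v \<bullet>c v) > 0"
proof -
  have v: "v \<in> carrier_vec (dim_row A)" and "v \<noteq> 0\<^sub>v (dim_row A)" and Av: "A *\<^sub>v v = x \<cdot>\<^sub>v v"
    using assms unfolding eigenvector_def by auto
  then have "v \<bullet>c v > 0"
    by simp
  then have "Re (v \<bullet>c v) > 0" and real: "complex_of_real (Re (v \<bullet>c v)) = v \<bullet>c v"
    by (simp_all add: less_complex_def complex_eq_iff)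
  then show "Re (v \<bullet>c v) > 0"
    by simp
  show "(A *\<^sub>v v) \<bullet>c v = x * complex_of_real (Re (v \<bullet>c v))"
    unfolding Av real using v by simp
qed

lemma hermitian_eigvals_real:
  fixes A :: "complex mat"
  assumes "hermitian_mat A" and A: "A \<in> carrier_mat n n" and "x \<in># eigvals A"
  shows "Im x = 0"
proof -
  obtain v where ev: "eigenvector A v x"
    using assms(3) unfolding mem_eigvals_iff[OF A] eigenvalue_def by blast
  then have "v \<in> carrier_vec n"
    using A unfolding eigenvector_def by simp
  from hermitian_quadratic_form_real[OF assms(1) A this] eigenvector_quadratic_form[OF ev]
  have "cnj x * complex_of_real (Re (v \<bullet>c v)) = x * complex_of_real (Re (v \<bullet>c v))"
    and "Re (v \<bullet>c v) > 0"
    by simp_all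
  then have "cnj x = x"
    by simp
  then show ?thesis
    by (metis Reals_cnj_iff complex_is_Real_iff)
qed

lemma psd_eigvals_nonneg:
  fixes A :: "complex mat"
  assumes "psd_mat A" and A: "A \<in> carrier_mat n n" and "x \<in># eigvals A"
  shows "Re x \<ge> 0"
proof -
  obtain v where ev: "eigenvector A v x"
    using assms(3) unfolding mem_eigvals_iff[OF A] eigenvalue_def by blast
  then have "v \<in> carrier_vec (dim_row A)"
    unfolding eigenvector_def by simp
  with assms(1) have "0 \<le> Re ((A *\<^sub>v v) \<bullet>c v)"
    unfolding psd_mat_def by blast
  with eigenvector_quadratic_form[OF ev] have "0 \<le> Re x * Re (v \<bullet>c v)" and "Re (v \<bullet>c v) > 0"
    by simp_all
  then show ?thesis
    by (simp add: zero_le_mult_iff)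
qed

lemma idempotent_eigvals:
  fixes A :: "complex mat"
  assumes "A * A = A" and A: "A \<in> carrier_mat n n" and "x \<in># eigvals A"
  shows "x = 0 \<or> x = 1"
proof -
  obtain v where v: "v \<in> carrier_vec n" and "v \<noteq> 0\<^sub>v n" and Av: "A *\<^sub>v v = x \<cdot>\<^sub>v v"
    using assms(3) A unfolding mem_eigvals_iff[OF A] eigenvalue_def eigenvector_def by auto
  then obtain i where i: "i < n" and vi: "v $ i \<noteq> 0"
    by (metis eq_vecI carrier_vecD index_zero_vec)
  have "(x * x) \<cdot>\<^sub>v v = A *\<^sub>v (A *\<^sub>v v)"
    using A v by (simp add: Av mult_mat_vec[of _ n n] smult_smult_assoc)
  also have "\<dots> = (A * A) *\<^sub>v v"
    by (rule assoc_mult_mat_vec[symmetric, OF A A v])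
  also have "\<dots> = x \<cdot>\<^sub>v v"
    unfolding assms(1) Av ..
  finally have "x * x * v $ i = x * v $ i"
    using i v by (metis carrier_vecD index_smult_vec(1))
  with vi show ?thesis
    by (metis mult_cancel_left1 mult_cancel_right mult_eq_0_iff)
qed

lemma trace_norm_hermitian:
  fixes A :: "complex mat"
  assumes "hermitian_mat A" and A: "A \<in> carrier_mat n n"
  shows "trace_norm A = (\<Sum>x\<in>#eigvals A. cmod x)"
proof -
  have "mat_adjoint A = A"
    using assms(1) unfolding hermitian_mat_def by simp
  then have "trace_norm A = (\<Sum>x\<in>#eigvals A. sqrt (Re (x * x)))"
    unfolding trace_norm_def by (simp add: eigvals_mult_self[OF A] multiset.map_comp comp_def)
  also have "\<dots> = (\<Sum>x\<in>#eigvals A. cmod x)"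
  proof (intro arg_cong[where f = sum_mset] image_mset_cong)
    fix x assume "x \<in># eigvals A"
    then have "Im x = 0"
      by (rule hermitian_eigvals_real[OF assms])
    then show "sqrt (Re (x * x)) = cmod x"
      by (simp add: cmod_def power2_eq_square)
  qed
  finally show ?thesis .
qed

lemma trace_dist_max_mixed:
  assumes "hermitian_mat A" and A: "A \<in> carrier_mat n n"
  shows "trace_dist A (max_mixed n) = (\<Sum>x\<in>#eigvals A. cmod (x - 1 / of_nat n)) / 2"
proof -
  let ?c = "complex_of_real (1 / real n)"
  have "trace_norm (A - ?c \<cdot>\<^sub>m 1\<^sub>m n) = (\<Sum>x\<in>#eigvals (A - ?c \<cdot>\<^sub>m 1\<^sub>m n). cmod x)"
    by (rule trace_norm_hermitian[OF hermitian_minus_scalar[OF assms, of "1 / real n"]]) (use A in auto)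
  also have "\<dots> = (\<Sum>x\<in>#eigvals A. cmod (x - ?c))"
    by (simp add: eigvals_minus_scalar[OF A] multiset.map_comp comp_def)
  finally show ?thesis
    by (simp add: trace_dist_def max_mixed_def)
qed

lemma density_mat_eigvals_bounds:
  assumes "density_mat n \<rho>" and "x \<in># eigvals \<rho>"
  shows "0 \<le> Re x" and "Re x \<le> 1"
proof -
  have \<rho>: "\<rho> \<in> carrier_mat n n" and psd: "psd_mat \<rho>" and tr: "mat_trace \<rho> = 1"
    using assms(1) unfolding density_mat_def by auto
  have nonneg: "0 \<le> Re y" if "y \<in># eigvals \<rho>" for y
    by (rule psd_eigvals_nonneg[OF psd \<rho> that])
  then show "0 \<le> Re x"
    using assms(2) .
  have Re_sum: "Re (sum_mset M) = (\<Sum>y\<in>#M. Re y)" for M :: "complex multiset"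
    by (induction M) auto
  have "1 = Re (sum_mset (eigvals \<rho>))"
    using mat_trace_eq_sum_eigvals[OF \<rho>] tr by simp
  also have "\<dots> = (\<Sum>y\<in>#add_mset x (eigvals \<rho> - {#x#}). Re y)"
    unfolding Re_sum insert_DiffM[OF assms(2)] ..
  also have "\<dots> = Re x + (\<Sum>y\<in>#eigvals \<rho> - {#x#}. Re y)"
    by simp
  finally have "Re x + (\<Sum>y\<in>#eigvals \<rho> - {#x#}. Re y) = 1" ..
  moreover have "(\<Sum>y\<in>#eigvals \<rho> - {#x#}. 0) \<le> (\<Sum>y\<in>#eigvals \<rho> - {#x#}. Re y)"
    using nonneg by (intro sum_mset_mono) (auto dest: in_diffD)
  ultimately show "Re x \<le> 1"
    by simp
qed

lemma vn_entropy_nonneg: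
  assumes "density_mat n \<rho>"
  shows "0 \<le> vn_entropy \<rho>"
proof -
  have "(if Re x = 0 then 0 else Re x * log 2 (Re x)) \<le> 0" if "x \<in># eigvals \<rho>" for x
    using density_mat_eigvals_bounds[OF assms that] by (simp add: mult_nonneg_nonpos)
  then have "(\<Sum>x\<in>#eigvals \<rho>. (if Re x = 0 then 0 else Re x * log 2 (Re x))) \<le> (\<Sum>x\<in>#eigvals \<rho>. 0)"
    by (rule sum_mset_mono)
  then show ?thesis
    unfolding vn_entropy_def by simp
qed

section \<open>Kronecker products\<close>

lemma sum_lessThan_mult_nat:
  "(\<Sum>k<n * m. g k) = (\<Sum>a<n. \<Sum>b<m. g (a * m + b :: nat))"
proof -
  have "(\<Sum>k<n * m. g k) = (\<Sum>a<n. sum g {a * m..<a * m + m})"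
    using sum.nat_group[of g m n] by (simp add: mult.commute)
  also have "\<dots> = (\<Sum>a<n. \<Sum>b<m. g (a * m + b))"
  proof (rule sum.cong[OF refl])
    fix a
    have "sum g {a * m..<a * m + m} = sum g {0 + a * m..<m + a * m}"
      by (simp add: add.commute)
    also have "\<dots> = (\<Sum>b = 0..<m. g (b + a * m))"
      by (rule sum.shift_bounds_nat_ivl)
    finally show "sum g {a * m..<a * m + m} = (\<Sum>b<m. g (a * m + b))"
      by (simp add: atLeast0LessThan add.commute)
  qed
  finally show ?thesis .
qed

lemma mset_map_upt_div_mod:
  fixes g h :: "nat \<Rightarrow> 'a :: times"
  shows "mset (map (\<lambda>k. g (k div m) * h (k mod m)) [0..<n * m])
    = (\<Sum>a\<in>#mset (map g [0..<n]). image_mset ((*) a) (mset (map h [0..<m])))"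
proof (induction n)
  case (Suc n)
  have "[0..<n * m + m] = [0..<n * m] @ [n * m..<n * m + m]"
    by (rule upt_add_eq_append) simp
  then have "[0..<Suc n * m] = [0..<n * m] @ map (\<lambda>b. n * m + b) [0..<m]"
    by (simp add: map_add_upt add.commute)
  moreover have "map (\<lambda>b. g ((n * m + b) div m) * h ((n * m + b) mod m)) [0..<m]
      = map (\<lambda>b. g n * h b) [0..<m]"
    by (rule map_cong) auto
  ultimately have "map (\<lambda>k. g (k div m) * h (k mod m)) [0..<Suc n * m]
      = map (\<lambda>k. g (k div m) * h (k mod m)) [0..<n * m] @ map (\<lambda>b. g n * h b) [0..<m]"
    by (simp add: comp_def)
  then have "mset (map (\<lambda>k. g (k div m) * h (k mod m)) [0..<Suc n * m])
      = mset (map (\<lambda>k. g (k div m) * h (k mod m)) [0..<n * m])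
        + image_mset ((*) (g n)) (mset (map h [0..<m]))"
    by (simp only: mset_append) (simp add: multiset.map_comp comp_def)
  then show ?case
    using Suc.IH by simp
qed simp

lemma kron_dim [simp]:
  "dim_row (kron A B) = dim_row A * dim_row B" "dim_col (kron A B) = dim_col A * dim_col B"
  unfolding kron_def by auto

lemma kron_carrier:
  "A \<in> carrier_mat n n \<Longrightarrow> B \<in> carrier_mat m m \<Longrightarrow> kron A B \<in> carrier_mat (n * m) (n * m)"
  by (intro carrier_matI) auto

lemma kron_index:
  assumes "A \<in> carrier_mat n n" and "B \<in> carrier_mat m m" and "i < n * m" and "j < n * m"
  shows "kron A B $$ (i, j) = A $$ (i div m, j div m) * B $$ (i mod m, j mod m)"
  using assms unfolding kron_def by auto

lemma kron_mult:
  assumes A: "A \<in> carrier_mat n n" and B: "B \<in> carrier_mat n n"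
    and C: "C \<in> carrier_mat m m" and D: "D \<in> carrier_mat m m"
  shows "kron A C * kron B D = kron (A * B) (C * D)"
proof (rule eq_matI)
  fix i j assume "i < dim_row (kron (A * B) (C * D))" "j < dim_col (kron (A * B) (C * D))"
  then have i: "i < n * m" and j: "j < n * m"
    using A B C D by auto
  then have "0 < m"
    by (cases m) auto
  with i j have bounds: "i div m < n" "j div m < n" "i mod m < m" "j mod m < m"
    by (auto simp: less_mult_imp_div_less)
  have split: "a * m + b < n * m" "(a * m + b) div m = a" "(a * m + b) mod m = b"
    if "a < n" "b < m" for a b
  proof -
    have "a * m + b < Suc a * m"
      using that by simp
    also have "\<dots> \<le> n * m"
      using that by (intro mult_right_mono) auto
    finally show "a * m + b < n * m" .
  qed (use that in auto)
  have "(kron A C * kron B D) $$ (i, j) = (\<Sum>k<n * m. kron A C $$ (i, k) * kron B D $$ (k, j))"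
    using i j A B C D by (simp add: scalar_prod_def atLeast0LessThan)
  also have "\<dots> = (\<Sum>a<n. \<Sum>b<m. kron A C $$ (i, a * m + b) * kron B D $$ (a * m + b, j))"
    by (rule sum_lessThan_mult_nat)
  also have "\<dots> = (\<Sum>a<n. \<Sum>b<m. (A $$ (i div m, a) * B $$ (a, j div m))
      * (C $$ (i mod m, b) * D $$ (b, j mod m)))"
    using split by (intro sum.cong refl) (simp add: kron_index[OF A C i] kron_index[OF B D _ j] ac_simps)
  also have "\<dots> = (A * B) $$ (i div m, j div m) * (C * D) $$ (i mod m, j mod m)"
    using A B C D bounds by (simp add: sum_product scalar_prod_def atLeast0LessThan)
  also have "\<dots> = kron (A * B) (C * D) $$ (i, j)"
    using A B C D i j by (simp add: kron_index[of _ n _ m])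
  finally show "(kron A C * kron B D) $$ (i, j) = kron (A * B) (C * D) $$ (i, j)" .
qed (use A B C D in auto)

lemma kron_one: "kron (1\<^sub>m n) (1\<^sub>m m) = 1\<^sub>m (n * m)"
proof (rule eq_matI)
  fix i j assume "i < dim_row (1\<^sub>m (n * m))" "j < dim_col (1\<^sub>m (n * m))"
  then have "i < n * m" "j < n * m" by simp_all
  moreover from this have "i mod m < m" "j mod m < m"
    by (metis mod_less_divisor mult_0_right neq0_conv not_less_zero)+
  moreover have "i = j \<longleftrightarrow> i div m = j div m \<and> i mod m = j mod m"
    by (metis div_mult_mod_eq)
  ultimately show "kron (1\<^sub>m n) (1\<^sub>m m) $$ (i, j) = 1\<^sub>m (n * m) $$ (i, j)"
    by (simp add: kron_index[of _ n _ m] less_mult_imp_div_less)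
qed simp_all

lemma hermitian_kron:
  assumes "hermitian_mat A" "hermitian_mat B" "A \<in> carrier_mat n n" "B \<in> carrier_mat m m"
  shows "hermitian_mat (kron A B)"
proof (rule hermitian_matI[OF kron_carrier[OF assms(3,4)]])
  fix i j assume i: "i < n * m" and j: "j < n * m"
  then have "0 < m"
    by (cases m) auto
  with i j have bounds: "i div m < n" "j div m < n" "i mod m < m" "j mod m < m"
    by (auto simp: less_mult_imp_div_less)
  then have "A $$ (j div m, i div m) = cnj (A $$ (i div m, j div m))"
    and "B $$ (j mod m, i mod m) = cnj (B $$ (i mod m, j mod m))"
    using hermitian_matD[OF assms(1), of "i div m" "j div m"]
      hermitian_matD[OF assms(2), of "i mod m" "j mod m"] assms(3,4) by simp_all
  then show "kron A B $$ (j, i) = cnj (kron A B $$ (i, j))"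
    by (simp add: kron_index[OF assms(3,4) i j] kron_index[OF assms(3,4) j i])
qed

lemma upper_triangular_kron:
  assumes "upper_triangular T" "upper_triangular S" "T \<in> carrier_mat n n" "S \<in> carrier_mat m m"
  shows "upper_triangular (kron T S)"
proof (rule upper_triangularI)
  fix i j assume ji: "j < i" and "i < dim_row (kron T S)"
  then have i: "i < n * m" and j: "j < n * m"
    using assms(3,4) by auto
  then have "0 < m"
    by (cases m) auto
  with i have bounds: "i div m < n" "i mod m < m"
    by (auto simp: less_mult_imp_div_less)
  have "j div m \<le> i div m"
    using ji by (simp add: div_le_mono)
  then consider "j div m < i div m" | "j div m = i div m" "j mod m < i mod m"
    using ji by (metis div_mult_mod_eq le_neq_implies_less nat_add_left_cancel_less)
  then show "kron T S $$ (i, j) = 0"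
    by cases (use upper_triangularD[OF assms(1)] upper_triangularD[OF assms(2)] assms(3,4) bounds
        in \<open>simp_all add: kron_index[OF assms(3,4) i j]\<close>)
qed

lemma diag_mat_kron:
  assumes "T \<in> carrier_mat n n" "S \<in> carrier_mat m m"
  shows "diag_mat (kron T S) = map (\<lambda>k. T $$ (k div m, k div m) * S $$ (k mod m, k mod m)) [0..<n * m]"
  using assms by (intro nth_equalityI) (auto simp: diag_mat_def kron_index)

lemma eigvals_kron:
  fixes A B :: "complex mat"
  assumes A: "A \<in> carrier_mat n n" and B: "B \<in> carrier_mat m m"
  shows "eigvals (kron A B) = (\<Sum>a\<in>#eigvals A. image_mset ((*) a) (eigvals B))"
proof -
  obtain T P Q where witA: "similar_mat_wit A T P Q" and utT: "upper_triangular T"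
    by (rule triangularizable[OF A])
  obtain S R W where witB: "similar_mat_wit B S R W" and utS: "upper_triangular S"
    by (rule triangularizable[OF B])
  note simA = similar_mat_witD2[OF A witA] and simB = similar_mat_witD2[OF B witB]
  have "kron P R * kron Q W = 1\<^sub>m (n * m)" "kron Q W * kron P R = 1\<^sub>m (n * m)"
    using simA simB by (simp_all add: kron_mult[of _ n _ _ m] kron_one)
  moreover have "kron A B = kron P R * kron T S * kron Q W"
    using simA(3,5-7) simB(3,5-7) by (simp add: kron_mult[of _ n _ _ m])
  ultimately have "similar_mat_wit (kron A B) (kron T S) (kron P R) (kron Q W)"
    using kron_carrier[OF A B] kron_carrier[OF simA(5) simB(5)]
      kron_carrier[OF simA(6) simB(6)] kron_carrier[OF simA(7) simB(7)]
    by (rule similar_mat_witI)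
  then have "eigvals (kron A B) = mset (diag_mat (kron T S))"
    by (rule eigvals_similar_upper_triangular[OF _ upper_triangular_kron[OF utT utS simA(5) simB(5)]])
  also have "\<dots> = (\<Sum>a\<in>#mset (diag_mat T). image_mset ((*) a) (mset (diag_mat S)))"
    unfolding diag_mat_kron[OF simA(5) simB(5)]
      mset_map_upt_div_mod[where g = "\<lambda>i. T $$ (i, i)" and h = "\<lambda>j. S $$ (j, j)"]
    using simA(5) simB(5) by (simp add: diag_mat_def)
  finally show ?thesis
    unfolding eigvals_similar_upper_triangular[OF witA utT] eigvals_similar_upper_triangular[OF witB utS] .
qed

section \<open>Tensoring with a pure state\<close>

lemma ket_bra_carrier: "ket_bra \<psi> \<in> carrier_mat (dim_vec \<psi>) (dim_vec \<psi>)"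
  unfolding ket_bra_def by simp

lemma ket_bra_index:
  "i < dim_vec \<psi> \<Longrightarrow> j < dim_vec \<psi> \<Longrightarrow> ket_bra \<psi> $$ (i, j) = \<psi> $ i * cnj (\<psi> $ j)"
  unfolding ket_bra_def by simp

lemma hermitian_ket_bra: "hermitian_mat (ket_bra \<psi>)"
  by (rule hermitian_matI[OF ket_bra_carrier]) (simp add: ket_bra_index)

lemma is_unit_vecD: "is_unit_vec \<psi> \<Longrightarrow> (\<Sum>k<dim_vec \<psi>. \<psi> $ k * cnj (\<psi> $ k)) = 1"
  unfolding is_unit_vec_def
  by (metis (no_types, lifting) complex_norm_square of_real_1 of_real_power of_real_sum sum.cong)

lemma ket_bra_idempotent:
  assumes "is_unit_vec \<psi>"
  shows "ket_bra \<psi> * ket_bra \<psi> = ket_bra \<psi>"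
proof (rule eq_matI)
  fix i j assume "i < dim_row (ket_bra \<psi>)" "j < dim_col (ket_bra \<psi>)"
  then have i: "i < dim_vec \<psi>" and j: "j < dim_vec \<psi>"
    using ket_bra_carrier[of \<psi>] by auto
  have "(ket_bra \<psi> * ket_bra \<psi>) $$ (i, j)
      = (\<Sum>k<dim_vec \<psi>. \<psi> $ i * cnj (\<psi> $ k) * (\<psi> $ k * cnj (\<psi> $ j)))"
    using i j ket_bra_carrier[of \<psi>]
    by (simp add: scalar_prod_def atLeast0LessThan ket_bra_index)
  also have "\<dots> = \<psi> $ i * cnj (\<psi> $ j) * (\<Sum>k<dim_vec \<psi>. \<psi> $ k * cnj (\<psi> $ k))"
    by (simp add: sum_distrib_left ac_simps)
  also have "\<dots> = ket_bra \<psi> $$ (i, j)"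
    using is_unit_vecD[OF assms] i j by (simp add: ket_bra_index)
  finally show "(ket_bra \<psi> * ket_bra \<psi>) $$ (i, j) = ket_bra \<psi> $$ (i, j)" .
qed auto

lemma mat_trace_ket_bra: "is_unit_vec \<psi> \<Longrightarrow> mat_trace (ket_bra \<psi>) = 1"
  using is_unit_vecD[of \<psi>] by (simp add: mat_trace_def ket_bra_def)

lemma eigvals_ket_bra:
  assumes "is_unit_vec \<psi>"
  shows "eigvals (ket_bra \<psi>) = {#1#} + replicate_mset (dim_vec \<psi> - 1) 0"
proof -
  define M where "M = eigvals (ket_bra \<psi>)"
  have zero_one: "x = 0 \<or> x = 1" if "x \<in># M" for x
    using idempotent_eigvals[OF ket_bra_idempotent[OF assms] ket_bra_carrier] that
    unfolding M_def by blast
  have M: "M = replicate_mset (count M 0) 0 + replicate_mset (count M 1) 1"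
  proof (rule multiset_eqI)
    fix x
    show "count M x = count (replicate_mset (count M 0) 0 + replicate_mset (count M 1) 1) x"
    proof (cases "x = 0 \<or> x = 1")
      case False
      then have "x \<notin># M"
        using zero_one by blast
      with False show ?thesis
        by (simp add: not_in_iff)
    qed auto
  qed
  have "sum_mset M = sum_mset (replicate_mset (count M 0) 0 + replicate_mset (count M 1) 1)"
    using M by (rule arg_cong)
  then have "of_nat (count M 1) = (1 :: complex)"
    using mat_trace_eq_sum_eigvals[OF ket_bra_carrier] mat_trace_ket_bra[OF assms]
    unfolding M_def by simp
  then have one: "count M 1 = 1"
    by (simp only: of_nat_eq_1_iff)
  have "size M = size (replicate_mset (count M 0) 0 + replicate_mset (count M 1) (1 :: complex))"
    using M by (rule arg_cong)
  then have "count M 0 = dim_vec \<psi> - 1"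
    using size_eigvals[OF ket_bra_carrier] one unfolding M_def by simp
  with one M show ?thesis
    unfolding M_def by (simp add: add.commute)
qed

lemma eigvals_kron_ket_bra:
  fixes A :: "complex mat"
  assumes "A \<in> carrier_mat n n" and "is_unit_vec \<psi>"
  shows "eigvals (kron A (ket_bra \<psi>)) = eigvals A + replicate_mset (n * (dim_vec \<psi> - 1)) 0"
proof -
  have "(\<Sum>a\<in>#L. {#a#} + replicate_mset k 0) = L + replicate_mset (size L * k) (0 :: complex)"
    for L :: "complex multiset" and k
    by (induction L) (auto simp: multiset_eq_iff)
  then show ?thesis
    unfolding eigvals_kron[OF assms(1) ket_bra_carrier] eigvals_ket_bra[OF assms(2)]
    by (simp add: size_eigvals[OF assms(1)])
qed

lemma vn_entropy_kron_ket_bra: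
  assumes "A \<in> carrier_mat n n" and "is_unit_vec \<psi>"
  shows "vn_entropy (kron A (ket_bra \<psi>)) = vn_entropy A"
  unfolding vn_entropy_def eigvals_kron_ket_bra[OF assms] by simp

lemma trace_dist_kron_ket_bra_le:
  fixes A :: "complex mat"
  assumes "hermitian_mat A" and A: "A \<in> carrier_mat n n" and "is_unit_vec \<psi>"
  shows "trace_dist (kron A (ket_bra \<psi>)) (max_mixed (n * dim_vec \<psi>))
    \<le> trace_dist A (max_mixed n) + (real (dim_vec \<psi>) - 1) / real (dim_vec \<psi>)"
proof -
  define d where "d = dim_vec \<psi>"
  define c :: complex where "c = 1 / of_nat n"
  define c' :: complex where "c' = 1 / of_nat (n * d)"
  have "d > 0"
    using assms(3) unfolding d_def is_unit_vec_def by (cases "dim_vec \<psi>") auto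
  have K: "hermitian_mat (kron A (ket_bra \<psi>))" "kron A (ket_bra \<psi>) \<in> carrier_mat (n * d) (n * d)"
    using hermitian_kron[OF assms(1) hermitian_ket_bra A ket_bra_carrier] kron_carrier[OF A ket_bra_carrier]
    unfolding d_def by auto
  have kron_dist: "2 * trace_dist (kron A (ket_bra \<psi>)) (max_mixed (n * d))
      = (\<Sum>x\<in>#eigvals A. cmod (x - c')) + real (n * (d - 1)) * cmod c'"
    using trace_dist_max_mixed[OF K] unfolding eigvals_kron_ket_bra[OF A assms(3)] c'_def d_def
    by simp
  have "(\<Sum>x\<in>#eigvals A. cmod (x - c')) \<le> (\<Sum>x\<in>#eigvals A. cmod (x - c) + cmod (c - c'))"
    by (intro sum_mset_mono norm_diff_triangle_le) auto
  also have "\<dots> = 2 * trace_dist A (max_mixed n) + real n * cmod (c - c')"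
    using trace_dist_max_mixed[OF assms(1) A]
    by (simp add: sum_mset.distrib size_eigvals[OF A] c_def)
  finally have shift: "(\<Sum>x\<in>#eigvals A. cmod (x - c'))
      \<le> 2 * trace_dist A (max_mixed n) + real n * cmod (c - c')" .
  have "real n * cmod (c - c') + real (n * (d - 1)) * cmod c' \<le> 2 * ((real d - 1) / real d)"
  proof (cases "n = 0")
    case False
    have diff: "c - c' = complex_of_real (1 / real n - 1 / (real n * real d))"
      and c': "cmod c' = 1 / (real n * real d)"
      unfolding c_def c'_def by (simp_all add: norm_divide norm_mult)
    have "1 / (real n * real d) \<le> 1 / real n"
      using False \<open>d > 0\<close> by (simp add: field_simps)
    then have "cmod (c - c') = 1 / real n - 1 / (real n * real d)"
      unfolding diff norm_of_real by simp
    with c' show ?thesis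
      using False \<open>d > 0\<close> by (simp add: field_simps of_nat_diff)
  qed (use \<open>d > 0\<close> in simp)
  with kron_dist shift show ?thesis
    unfolding d_def by linarith
qed

theorem mainTheorem7:
  fixes N :: nat and \<rho> :: "complex mat" and \<psi> :: "complex vec"
  assumes "N \<ge> 2"
    and "density_mat N \<rho>"
    and "\<psi> \<in> carrier_vec N"
    and "is_unit_vec \<psi>"
  shows "qscm (kron \<rho> (ket_bra \<psi>))
    \<le> vn_entropy \<rho> / (2 * log 2 (real N))
       * (trace_dist \<rho> (max_mixed N) + (real N - 1) / real N)"
proof -
  have \<rho>: "\<rho> \<in> carrier_mat N N" and "hermitian_mat \<rho>"
    using assms(2) unfolding density_mat_def psd_mat_def by auto
  have dim: "dim_vec \<psi> = N" "dim_row (kron \<rho> (ket_bra \<psi>)) = N * N"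
    using assms(3) \<rho> ket_bra_carrier[of \<psi>] by auto
  have log: "log 2 (real (N * N)) = 2 * log 2 (real N)" and "log 2 (real N) > 0"
    using assms(1) by (simp_all add: log_mult)
  have "qscm (kron \<rho> (ket_bra \<psi>))
      = vn_entropy \<rho> / (2 * log 2 (real N)) * trace_dist (kron \<rho> (ket_bra \<psi>)) (max_mixed (N * N))"
    unfolding qscm_def Let_def dim(2) log vn_entropy_kron_ket_bra[OF \<rho> assms(4)] by simp
  also have "\<dots> \<le> vn_entropy \<rho> / (2 * log 2 (real N)) * (trace_dist \<rho> (max_mixed N) + (real N - 1) / real N)"
    using trace_dist_kron_ket_bra_le[OF \<open>hermitian_mat \<rho>\<close> \<rho> assms(4)] vn_entropy_nonneg[OF assms(2)]
      \<open>log 2 (real N) > 0\<close>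
    unfolding dim(1) by (intro mult_left_mono) auto
  finally show ?thesis .
qed

end
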